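(* Let $Z$ be a standard normal random variable. Then the distribution of $\ln|Z|$ is infinitely divisible. More specifically, if $E_0,E_1,E_2,\dots$ are independent identically distributed standard exponential random variables (i.e. $\mathbb P(E_j>x)=e^{-x}$ for $x\ge 0$) and $\tilde E_j:=E_j-1$, then the series below converge almost surely and $$\ln|Z|\overset{D}{=}\frac{\ln 2}{2}-E_0-\sum_{j=1}^\infty\Big[\frac{E_j}{2j+1}-\frac12\ln\Big(1+\frac1j\Big)\Big] = -\frac{\gamma+\ln 2}{2}-\tilde E_0-\sum_{j=1}^\infty\frac{\tilde E_j}{2j+1},$$ where $\gamma$ is Euler's constant.
   Context: $\overset{D}{=}$ denotes equality in distribution. The distribution of $\ln|Z|$ for standard normal $Z$ is called the exp-normal distribution. *)

theory Defs
  imports "HOL-Probability.Probability"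
begin

fun conv_pow :: "real measure \<Rightarrow> nat \<Rightarrow> real measure" where
  "conv_pow \<nu> 0 = return borel 0"
| "conv_pow \<nu> (Suc n) = convolution \<nu> (conv_pow \<nu> n)"

definition infinitely_divisible :: "real measure \<Rightarrow> bool" where
  "infinitely_divisible \<mu> \<longleftrightarrow>
     (\<forall>n::nat. n \<ge> 1 \<longrightarrow>
        (\<exists>\<nu>. prob_space \<nu> \<and> sets \<nu> = sets borel \<and> \<mu> = conv_pow \<nu> n))"

end

theory Submission
  imports Defs "HOL-Real_Asymp.Real_Asymp"
begin

text \<open>
  The characteristic function of \<open>ln \<bar>Z\<bar>\<close> is \<open>\<phi>(t) = 2\<^bsup>it/2\<^esup> \<Gamma>((1 + it)/2) / \<surd>\<pi>\<close>.
  Gauss's product formula for \<open>\<Gamma>\<close> writes \<open>\<phi>(t)\<close> as the limit of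
  \<open>exp (it (ln 2 + ln (n + 1)) / 2) \<Prod>\<^sub>k\<^sub>\<le>\<^sub>n (1 + it/(2k + 1))\<^sup>-\<^sup>1\<close>, and this is exactly the
  characteristic function of the partial sums of the series, because \<open>E\<^sub>k\<close> has characteristic
  function \<open>1/(1 - is)\<close>. The series converges almost surely (its variance is finite, and
  positivity of the \<open>E\<^sub>k\<close> controls the partial sums between the sparse indices \<open>i\<^sup>6\<close>), so by
  dominated convergence its law has characteristic function \<open>\<phi>\<close>, and Levy's uniqueness
  theorem identifies the two laws. Replacing the \<open>E\<^sub>k\<close> by independent Gamma variables of shape
  \<open>1/n\<close>, whose \<open>n\<close>-fold convolution is the exponential law, the same series produces an
  \<open>n\<close>-th convolution root of the law of \<open>ln \<bar>Z\<bar>\<close>.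
\<close>

section \<open>Almost sure convergence of weighted centered series\<close>

lemma summable_inverse_square: "summable (\<lambda>i::nat. 1 / real i ^ 2)"
  using inverse_power_summable[of 2, where 'a=real] by (simp add: field_simps)

lemma summable_if_summable_power4_mult_square:
  fixes f :: "nat \<Rightarrow> real"
  assumes "summable (\<lambda>i. real i ^ 4 * (f i)\<^sup>2)"
  shows "summable f"
proof (rule summable_comparison_test_ev[OF _ summable_inverse_square])
  have "eventually (\<lambda>i. real i ^ 4 * (f i)\<^sup>2 < 1) at_top"
    using summable_LIMSEQ_zero[OF assms] by (rule order_tendstoD) simp
  then show "eventually (\<lambda>i. norm (f i) \<le> 1 / real i ^ 2) at_top"
    using eventually_ge_at_top[of "1::nat"]
  proof eventually_elim
    case (elim i)
    have "(real i ^ 2 * \<bar>f i\<bar>)\<^sup>2 < 1\<^sup>2"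
      using elim(1) by (simp add: power_mult_distrib power2_abs flip: power_mult)
    then have "real i ^ 2 * \<bar>f i\<bar> < 1"
      by (rule power_less_imp_less_base) simp
    then show ?case using elim(2) by (simp add: field_simps)
  qed
qed

lemma LIMSEQ_if_block_oscillation_vanishes:
  fixes S :: "nat \<Rightarrow> 'a::real_normed_vector" and \<sigma> :: "nat \<Rightarrow> nat"
  assumes \<sigma>: "strict_mono \<sigma>" "\<sigma> 0 = 0"
    and lim: "(\<lambda>i. S (\<sigma> i)) \<longlonglongrightarrow> L" and e: "e \<longlonglongrightarrow> 0"
    and osc: "\<And>i n. \<sigma> i \<le> n \<Longrightarrow> n < \<sigma> (Suc i) \<Longrightarrow> norm (S n - S (\<sigma> i)) \<le> e i"
  shows "S \<longlonglongrightarrow> L"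
proof -
  define \<beta> where "\<beta> n = (LEAST i. n < \<sigma> (Suc i))" for n
  have upper: "n < \<sigma> (Suc (\<beta> n))" for n
  proof -
    have "n < \<sigma> (Suc n)"
      using seq_suble[OF \<sigma>(1), of "Suc n"] by simp
    then show ?thesis unfolding \<beta>_def by (rule LeastI)
  qed
  have lower: "\<sigma> (\<beta> n) \<le> n" for n
  proof (cases "\<beta> n")
    case (Suc i)
    then have "\<not> n < \<sigma> (Suc i)"
      using not_less_Least[of i "\<lambda>i. n < \<sigma> (Suc i)"] by (simp add: \<beta>_def)
    with Suc show ?thesis by simp
  qed (simp add: \<sigma>(2))
  have \<beta>_at_top: "filterlim \<beta> at_top sequentially"
    unfolding filterlim_at_top
  proof
    fix I
    show "eventually (\<lambda>n. I \<le> \<beta> n) sequentially"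
      using eventually_ge_at_top[of "\<sigma> I"]
    proof eventually_elim
      case (elim n)
      then have "\<sigma> I < \<sigma> (Suc (\<beta> n))" using upper[of n] by linarith
      then show ?case using strict_mono_less[OF \<sigma>(1)] by simp
    qed
  qed
  have "(\<lambda>n. S (\<sigma> (\<beta> n)) + (S n - S (\<sigma> (\<beta> n)))) \<longlonglongrightarrow> L + 0"
  proof (rule tendsto_add)
    show "(\<lambda>n. S (\<sigma> (\<beta> n))) \<longlonglongrightarrow> L"
      by (rule filterlim_compose[OF lim \<beta>_at_top])
    show "(\<lambda>n. S n - S (\<sigma> (\<beta> n))) \<longlonglongrightarrow> 0"
      by (rule Lim_null_comparison[OF _ filterlim_compose[OF e \<beta>_at_top]])
         (intro always_eventually allI osc lower upper)
  qed
  then show ?thesis by simp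
qed

lemma abs_sum_centered_le:
  fixes x b :: "nat \<Rightarrow> real"
  assumes x: "\<And>j. 0 \<le> x j" and b: "\<And>j. 0 \<le> b j" and "k \<le> n" "n \<le> l"
  shows "\<bar>\<Sum>j=k..<n. (x j - m) * b j\<bar> \<le> \<bar>\<Sum>j=k..<l. (x j - m) * b j\<bar> + 2 * \<bar>m\<bar> * (\<Sum>j=k..<l. b j)"
proof -
  define P where "P A = (\<Sum>j\<in>A. x j * b j)" for A
  define Q where "Q A = (\<Sum>j\<in>A. b j)" for A
  have sub: "{k..<n} \<subseteq> {k..<l}" using \<open>n \<le> l\<close> by auto
  have split: "(\<Sum>j\<in>A. (x j - m) * b j) = P A - m * Q A" for A
    by (simp add: P_def Q_def algebra_simps sum_subtractf sum_distrib_left)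
  have P: "0 \<le> P {k..<n}" "P {k..<n} \<le> P {k..<l}"
    unfolding P_def using x b by (auto intro!: sum_nonneg sum_mono2[OF _ sub])
  have Q: "0 \<le> Q {k..<n}" "Q {k..<n} \<le> Q {k..<l}"
    unfolding Q_def using b by (auto intro!: sum_nonneg sum_mono2[OF _ sub])
  have "\<bar>m * Q {k..<n}\<bar> \<le> \<bar>m\<bar> * Q {k..<l}" "\<bar>m * Q {k..<l}\<bar> \<le> \<bar>m\<bar> * Q {k..<l}"
    using Q by (auto simp: abs_mult mult_left_mono)
  with P show ?thesis
    unfolding split Q_def[symmetric] by (auto simp: abs_le_iff)
qed

lemma block_sum_odd_weights_tendsto_zero:
  "(\<lambda>i. \<Sum>j=i^6..<Suc i^6. 1 / (2 * real j + 1)) \<longlonglongrightarrow> 0"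
proof (rule tendsto_sandwich[OF _ _ tendsto_const])
  show "eventually (\<lambda>i. 0 \<le> (\<Sum>j=i^6..<Suc i^6. 1 / (2 * real j + 1))) sequentially"
    by (simp add: sum_nonneg)
  have "(\<Sum>j=i^6..<Suc i^6. 1 / (2 * real j + 1)) \<le> real (card {i^6..<Suc i^6}) * (1 / (2 * real (i^6) + 1))" for i
    by (rule sum_bounded_above) (auto intro!: divide_left_mono mult_pos_pos add_nonneg_pos)
  then show "eventually (\<lambda>i. (\<Sum>j=i^6..<Suc i^6. 1 / (2 * real j + 1)) \<le>
      (real (Suc i ^ 6) - real (i^6)) / (2 * real (i^6) + 1)) sequentially"
    using power_mono[of _ "Suc _" 6] by (simp add: of_nat_diff)
  show "(\<lambda>i::nat. (real (Suc i ^ 6) - real (i^6)) / (2 * real (i^6) + 1)) \<longlonglongrightarrow> 0"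
    by real_asymp
qed

lemma summable_centered_if_summable_block_sums:
  fixes x :: "nat \<Rightarrow> real"
  assumes x: "\<And>j. 0 \<le> x j"
    and blocks: "summable (\<lambda>i. real i ^ 4 * (\<Sum>j=i^6..<Suc i^6. (x j - m) / (2 * real j + 1))\<^sup>2)"
  shows "summable (\<lambda>j. (x j - m) / (2 * real j + 1))"
proof -
  define S where "S n = (\<Sum>j<n. (x j - m) / (2 * real j + 1))" for n
  define \<Delta> where "\<Delta> i = (\<Sum>j=i^6..<Suc i^6. (x j - m) / (2 * real j + 1))" for i
  define D where "D i = (\<Sum>j=i^6..<Suc i^6. 1 / (2 * real j + 1))" for i
  have mono6: "strict_mono (\<lambda>i::nat. i ^ 6)"
    by (rule strict_monoI) (simp add: power_strict_mono)
  have sum\<Delta>: "summable \<Delta>"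
    using summable_if_summable_power4_mult_square blocks by (simp add: \<Delta>_def)
  have S_blocks: "S (i^6) = (\<Sum>k<i. \<Delta> k)" for i
  proof (induction i)
    case (Suc i)
    have "i ^ 6 \<le> Suc i ^ 6" using strict_mono_less_eq[OF mono6] by simp
    then have "S (Suc i ^ 6) = S (i^6) + \<Delta> i"
      unfolding S_def \<Delta>_def lessThan_atLeast0 by (simp add: sum.atLeastLessThan_concat)
    with Suc show ?case by simp
  qed (simp add: S_def)
  have "D \<longlonglongrightarrow> 0"
    unfolding D_def by (rule block_sum_odd_weights_tendsto_zero)
  then have e: "(\<lambda>i. \<bar>\<Delta> i\<bar> + 2 * \<bar>m\<bar> * D i) \<longlonglongrightarrow> \<bar>0\<bar> + 2 * \<bar>m\<bar> * 0"
    by (intro tendsto_intros summable_LIMSEQ_zero[OF sum\<Delta>])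
  have "S \<longlonglongrightarrow> suminf \<Delta>"
  proof (rule LIMSEQ_if_block_oscillation_vanishes[OF mono6])
    show "(\<lambda>i. S (i ^ 6)) \<longlonglongrightarrow> suminf \<Delta>"
      unfolding S_blocks by (rule summable_LIMSEQ[OF sum\<Delta>])
    show "(\<lambda>i. \<bar>\<Delta> i\<bar> + 2 * \<bar>m\<bar> * D i) \<longlonglongrightarrow> 0"
      using e by simp
    fix i n assume block: "i ^ 6 \<le> n" "n < Suc i ^ 6"
    have "S n - S (i^6) = (\<Sum>j=i^6..<n. (x j - m) / (2 * real j + 1))"
      unfolding S_def lessThan_atLeast0 by (rule sum_diff_nat_ivl) (use block in auto)
    also have "\<bar>\<dots>\<bar> \<le> \<bar>\<Delta> i\<bar> + 2 * \<bar>m\<bar> * D i"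
      using abs_sum_centered_le[OF x, where b="\<lambda>j. 1 / (2 * real j + 1)" and k="i^6" and l="Suc i ^ 6"]
        block by (simp add: \<Delta>_def D_def)
    finally show "norm (S n - S (i ^ 6)) \<le> \<bar>\<Delta> i\<bar> + 2 * \<bar>m\<bar> * D i" by simp
  qed simp
  then show ?thesis unfolding S_def by (auto simp: summable_def sums_def)
qed

lemma AE_summable_if_summable_integrals:
  fixes Y :: "nat \<Rightarrow> 'a \<Rightarrow> real"
  assumes int: "\<And>i. integrable M (Y i)" and nonneg: "\<And>i. AE x in M. 0 \<le> Y i x"
    and summ: "summable (\<lambda>i. integral\<^sup>L M (Y i))"
  shows "AE x in M. summable (\<lambda>i. Y i x)"
proof -
  have "(\<integral>\<^sup>+x. (\<Sum>i. ennreal (Y i x)) \<partial>M) = (\<Sum>i. ennreal (integral\<^sup>L M (Y i)))"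
    using int by (simp add: nn_integral_suminf nn_integral_eq_integral nonneg)
  also have "\<dots> = ennreal (\<Sum>i. integral\<^sup>L M (Y i))"
    by (rule suminf_ennreal2[OF _ summ]) (simp add: integral_nonneg_AE nonneg)
  finally have "AE x in M. (\<Sum>i. ennreal (Y i x)) \<noteq> \<infinity>"
    using int by (intro nn_integral_PInf_AE) auto
  moreover have "AE x in M. \<forall>i. 0 \<le> Y i x"
    by (simp add: AE_all_countable nonneg)
  ultimately show ?thesis
    by eventually_elim (auto intro: summable_suminf_not_top)
qed

lemma summable_power4_mult_block_sum_odd_weights_square:
  "summable (\<lambda>i. real i ^ 4 * (\<Sum>j=i^6..<Suc i^6. (1 / (2 * real j + 1))\<^sup>2))"
proof (rule summable_comparison_test_ev[OF _ summable_inverse_square])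
  have "(\<Sum>j=i^6..<Suc i^6. (1 / (2 * real j + 1))\<^sup>2) \<le> real (card {i^6..<Suc i^6}) * (1 / (2 * real (i^6) + 1))\<^sup>2" for i
    by (rule sum_bounded_above) (auto intro!: power_mono divide_left_mono mult_pos_pos add_nonneg_pos)
  then have "(\<Sum>j=i^6..<Suc i^6. (1 / (2 * real j + 1))\<^sup>2) \<le>
      (real (Suc i ^ 6) - real (i^6)) / (2 * real (i^6) + 1)\<^sup>2" for i
    using power_mono[of i "Suc i" 6] by (simp add: of_nat_diff power_divide)
  then have "real i ^ 4 * (\<Sum>j=i^6..<Suc i^6. (1 / (2 * real j + 1))\<^sup>2) \<le>
      real i ^ 4 * ((real (Suc i ^ 6) - real (i^6)) / (2 * real (i^6) + 1)\<^sup>2)" for i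
    by (intro mult_left_mono) simp_all
  moreover have "eventually (\<lambda>i::nat. real i ^ 4 * ((real (Suc i ^ 6) - real (i^6)) / (2 * real (i^6) + 1)\<^sup>2) \<le> 1 / real i ^ 2) at_top"
    by real_asymp
  ultimately show "eventually (\<lambda>i. norm (real i ^ 4 * (\<Sum>j=i^6..<Suc i^6. (1 / (2 * real j + 1))\<^sup>2)) \<le> 1 / real i ^ 2) at_top"
    by (auto elim!: eventually_mono intro: order_trans simp: sum_nonneg)
qed

context prob_space
begin

lemma integrable_expectation_mult_indep:
  fixes Y :: "nat \<Rightarrow> 'a \<Rightarrow> real"
  assumes ind: "indep_vars (\<lambda>_. borel) Y UNIV" and int: "\<And>k. integrable M (Y k)"
    and "j \<noteq> k"
  shows "integrable M (\<lambda>\<omega>. Y j \<omega> * Y k \<omega>)"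
    "expectation (\<lambda>\<omega>. Y j \<omega> * Y k \<omega>) = expectation (Y j) * expectation (Y k)"
proof -
  have ind_jk: "indep_vars (\<lambda>_. borel) Y {j, k}"
    by (rule indep_vars_subset[OF ind]) auto
  show "integrable M (\<lambda>\<omega>. Y j \<omega> * Y k \<omega>)"
    using indep_vars_integrable[OF _ ind_jk] int \<open>j \<noteq> k\<close> by simp
  show "expectation (\<lambda>\<omega>. Y j \<omega> * Y k \<omega>) = expectation (Y j) * expectation (Y k)"
    using indep_vars_lebesgue_integral[OF _ ind_jk] int \<open>j \<noteq> k\<close> by simp
qed

lemma expectation_square_sum_indep:
  fixes Y :: "nat \<Rightarrow> 'a \<Rightarrow> real"
  assumes ind: "indep_vars (\<lambda>_. borel) Y UNIV" and int: "\<And>k. integrable M (Y k)"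
    and int2: "\<And>k. integrable M (\<lambda>\<omega>. (Y k \<omega>)\<^sup>2)"
    and centered: "\<And>k. expectation (Y k) = 0" and "finite J"
  shows "integrable M (\<lambda>\<omega>. (\<Sum>j\<in>J. c j * Y j \<omega>)\<^sup>2)"
    "expectation (\<lambda>\<omega>. (\<Sum>j\<in>J. c j * Y j \<omega>)\<^sup>2) = (\<Sum>j\<in>J. (c j)\<^sup>2 * expectation (\<lambda>\<omega>. (Y j \<omega>)\<^sup>2))"
proof -
  have square: "(\<lambda>\<omega>. (\<Sum>j\<in>J. c j * Y j \<omega>)\<^sup>2) = (\<lambda>\<omega>. \<Sum>j\<in>J. \<Sum>k\<in>J. c j * c k * (Y j \<omega> * Y k \<omega>))"
    by (auto simp: power2_eq_square sum_product intro!: sum.cong)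
  have int_jk: "integrable M (\<lambda>\<omega>. c j * c k * (Y j \<omega> * Y k \<omega>))" for j k
    using int2[of j] integrable_expectation_mult_indep(1)[OF ind int, of j k]
    by (cases "j = k") (simp_all add: power2_eq_square)
  have E_jk: "expectation (\<lambda>\<omega>. Y j \<omega> * Y k \<omega>) = (if j = k then expectation (\<lambda>\<omega>. (Y j \<omega>)\<^sup>2) else 0)" for j k
    using integrable_expectation_mult_indep(2)[OF ind int, of j k] centered
    by (cases "j = k") (simp_all add: power2_eq_square)
  have int_j: "integrable M (\<lambda>\<omega>. \<Sum>k\<in>J. c j * c k * (Y j \<omega> * Y k \<omega>))" for j
    by (intro Bochner_Integration.integrable_sum int_jk)
  show "integrable M (\<lambda>\<omega>. (\<Sum>j\<in>J. c j * Y j \<omega>)\<^sup>2)"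
    unfolding square by (intro Bochner_Integration.integrable_sum int_j)
  have "expectation (\<lambda>\<omega>. (\<Sum>j\<in>J. c j * Y j \<omega>)\<^sup>2) =
      (\<Sum>j\<in>J. \<Sum>k\<in>J. c j * c k * expectation (\<lambda>\<omega>. Y j \<omega> * Y k \<omega>))"
    unfolding square Bochner_Integration.integral_sum[OF int_j]
    by (intro sum.cong refl) (simp add: Bochner_Integration.integral_sum[OF int_jk])
  also have "\<dots> = (\<Sum>j\<in>J. \<Sum>k\<in>J. if k = j then c j * c k * expectation (\<lambda>\<omega>. (Y j \<omega>)\<^sup>2) else 0)"
    by (intro sum.cong refl) (simp add: E_jk)
  also have "\<dots> = (\<Sum>j\<in>J. (c j)\<^sup>2 * expectation (\<lambda>\<omega>. (Y j \<omega>)\<^sup>2))"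
    using \<open>finite J\<close> by (simp add: sum.delta power2_eq_square)
  finally show "expectation (\<lambda>\<omega>. (\<Sum>j\<in>J. c j * Y j \<omega>)\<^sup>2) = (\<Sum>j\<in>J. (c j)\<^sup>2 * expectation (\<lambda>\<omega>. (Y j \<omega>)\<^sup>2))" .
qed

text \<open>
  With \<open>\<Delta>\<^sub>i\<close> the sum of the block \<open>i\<^sup>6 \<le> j < (i + 1)\<^sup>6\<close>, \<open>E[\<Delta>\<^sub>i\<^sup>2] = O(i\<^sup>-\<^sup>7)\<close>, so
  \<open>\<Sum> i\<^sup>4 \<Delta>\<^sub>i\<^sup>2\<close> has finite expectation.
\<close>
lemma AE_summable_centered_odd_weights:
  fixes X :: "nat \<Rightarrow> 'a \<Rightarrow> real"
  assumes ind: "indep_vars (\<lambda>_. borel) X UNIV"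
    and nonneg: "\<And>k. AE \<omega> in M. 0 \<le> X k \<omega>"
    and int1: "\<And>k. integrable M (X k)" and int2: "\<And>k. integrable M (\<lambda>\<omega>. (X k \<omega>)\<^sup>2)"
    and mean: "\<And>k. expectation (X k) = m"
    and var: "\<And>k. expectation (\<lambda>\<omega>. (X k \<omega> - m)\<^sup>2) = v"
  shows "AE \<omega> in M. summable (\<lambda>j. (X j \<omega> - m) / (2 * real j + 1))"
proof -
  define Y where "Y k \<omega> = X k \<omega> - m" for k \<omega>
  define c where "c j = 1 / (2 * real j + 1)" for j
  define \<Delta> where "\<Delta> i \<omega> = (\<Sum>j=i^6..<Suc i^6. c j * Y j \<omega>)" for i \<omega>
  have ind_Y: "indep_vars (\<lambda>_. borel) Y UNIV"
    unfolding Y_def by (rule indep_vars_compose2[OF ind, where Y="\<lambda>_ x. x - m", simplified]) simp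
  have int_Y: "integrable M (Y k)" for k
    unfolding Y_def using int1[of k] by simp
  have square_Y: "(\<lambda>\<omega>. (Y k \<omega>)\<^sup>2) = (\<lambda>\<omega>. (X k \<omega>)\<^sup>2 - 2 * m * X k \<omega> + m\<^sup>2)" for k
    by (auto simp: Y_def power2_eq_square algebra_simps)
  have int_Y2: "integrable M (\<lambda>\<omega>. (Y k \<omega>)\<^sup>2)" for k
    unfolding square_Y using int1[of k] int2[of k] by simp
  have centered: "expectation (Y k) = 0" for k
    unfolding Y_def using int1[of k] mean[of k] by (simp add: prob_space)
  have var_Y: "expectation (\<lambda>\<omega>. (Y k \<omega>)\<^sup>2) = v" for k
    unfolding Y_def by (rule var)
  have int\<Delta>: "integrable M (\<lambda>\<omega>. (\<Delta> i \<omega>)\<^sup>2)" for i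
    unfolding \<Delta>_def by (rule expectation_square_sum_indep(1)[OF ind_Y int_Y int_Y2 centered]) simp
  have E\<Delta>: "expectation (\<lambda>\<omega>. real i ^ 4 * (\<Delta> i \<omega>)\<^sup>2) = v * (real i ^ 4 * (\<Sum>j=i^6..<Suc i^6. (c j)\<^sup>2))" for i
    unfolding \<Delta>_def
    by (simp add: expectation_square_sum_indep[OF ind_Y int_Y int_Y2 centered] var_Y sum_distrib_left mult_ac)
  have "summable (\<lambda>i. expectation (\<lambda>\<omega>. real i ^ 4 * (\<Delta> i \<omega>)\<^sup>2))"
    unfolding E\<Delta> c_def by (intro summable_mult summable_power4_mult_block_sum_odd_weights_square)
  moreover have "integrable M (\<lambda>\<omega>. real i ^ 4 * (\<Delta> i \<omega>)\<^sup>2)" for i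
    using int\<Delta>[of i] by simp
  ultimately have "AE \<omega> in M. summable (\<lambda>i. real i ^ 4 * (\<Delta> i \<omega>)\<^sup>2)"
    by (intro AE_summable_if_summable_integrals) auto
  moreover have "AE \<omega> in M. \<forall>j. 0 \<le> X j \<omega>"
    by (simp add: AE_all_countable nonneg)
  ultimately show ?thesis
    by eventually_elim
      (rule summable_centered_if_summable_block_sums, auto simp: \<Delta>_def c_def Y_def)
qed

end

section \<open>Characteristic functions\<close>

lemma (in prob_space) char_distr:
  fixes F :: "'a \<Rightarrow> real"
  assumes [measurable]: "F \<in> borel_measurable M"
  shows "char (distr M borel F) s = expectation (\<lambda>\<omega>. iexp (s * F \<omega>))"
  unfolding char_def by (subst integral_distr) auto

lemma char_convolution:
  assumes "real_distribution \<mu>" "real_distribution \<nu>"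
  shows "char (\<mu> \<star> \<nu>) t = char \<mu> t * char \<nu> t" "real_distribution (\<mu> \<star> \<nu>)"
proof -
  interpret \<mu>: real_distribution \<mu> by fact
  interpret \<nu>: real_distribution \<nu> by fact
  interpret pair_prob_space \<mu> \<nu> ..
  have [measurable_cong]: "sets \<mu> = sets borel" "sets \<nu> = sets borel" by simp_all
  show "real_distribution (\<mu> \<star> \<nu>)"
    unfolding convolution_def by (rule real_distribution_distr) simp
  have "char (\<mu> \<star> \<nu>) t = (CLINT p|\<mu> \<Otimes>\<^sub>M \<nu>. iexp (t * (fst p + snd p)))"
    unfolding char_def convolution_def by (subst integral_distr) (auto simp: case_prod_beta)
  also have "\<dots> = (CLINT x|\<mu>. (CLINT y|\<nu>. iexp (t * (x + y))))"
    by (subst integral_fst'[symmetric]) (auto intro!: integrable_const_bound[where B=1])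
  also have "\<dots> = char \<mu> t * char \<nu> t"
    unfolding char_def by (simp add: distrib_left exp_add)
  finally show "char (\<mu> \<star> \<nu>) t = char \<mu> t * char \<nu> t" .
qed

lemma char_conv_pow:
  assumes "real_distribution \<nu>"
  shows "real_distribution (conv_pow \<nu> n) \<and> char (conv_pow \<nu> n) t = char \<nu> t ^ n"
proof (induction n)
  case 0
  have "char (return borel 0) t = 1"
    unfolding char_def by (subst integral_return) auto
  then show ?case
    by (simp add: real_distribution_def real_distribution_axioms_def prob_space_return)
next
  case (Suc n)
  then show ?case using char_convolution[OF assms] by simp
qed

lemma infinitely_divisible_if_char_roots:
  assumes \<mu>: "real_distribution \<mu>"
    and roots: "\<And>n. 1 \<le> n \<Longrightarrow> \<exists>\<nu>. real_distribution \<nu> \<and> (\<forall>t. char \<nu> t ^ n = char \<mu> t)"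
  shows "infinitely_divisible \<mu>"
  unfolding infinitely_divisible_def
proof (intro allI impI)
  fix n :: nat assume "1 \<le> n"
  then obtain \<nu> where \<nu>: "real_distribution \<nu>" "\<And>t. char \<nu> t ^ n = char \<mu> t"
    using roots by blast
  have "\<mu> = conv_pow \<nu> n"
    using char_conv_pow[OF \<nu>(1)] \<nu>(2) by (intro Levy_uniqueness[OF \<mu>]) auto
  with \<nu>(1) show "\<exists>\<nu>. prob_space \<nu> \<and> sets \<nu> = sets borel \<and> \<mu> = conv_pow \<nu> n"
    unfolding real_distribution_def real_distribution_axioms_def by blast
qed

lemma (in prob_space) char_odd_weighted_partial_sum:
  fixes X :: "nat \<Rightarrow> 'a \<Rightarrow> real" and d :: "nat \<Rightarrow> real"
  assumes ind: "indep_vars (\<lambda>_. borel) X UNIV"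
  shows "expectation (\<lambda>\<omega>. iexp (t * (c - X 0 \<omega> - (\<Sum>j<n. X (Suc j) \<omega> / (2 * real (Suc j) + 1) - d j)))) =
    iexp (t * (c + (\<Sum>j<n. d j))) * (\<Prod>k<Suc n. char (distr M borel (X k)) (- t / (2 * real k + 1)))"
proof -
  have [measurable]: "X i \<in> borel_measurable M" for i
    using ind unfolding indep_vars_def by auto
  define b where "b k = - t / (2 * real k + 1)" for k
  have linear: "t * (c - X 0 \<omega> - (\<Sum>j<n. X (Suc j) \<omega> / (2 * real (Suc j) + 1) - d j)) =
      t * (c + (\<Sum>j<n. d j)) + (\<Sum>k<Suc n. b k * X k \<omega>)" for \<omega>
    unfolding sum.lessThan_Suc_shift
    by (simp add: b_def sum_subtractf algebra_simps sum_distrib_left sum_negf)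
  have ind_iexp: "indep_vars (\<lambda>_. borel) (\<lambda>k \<omega>. iexp (b k * X k \<omega>)) UNIV"
    by (rule indep_vars_compose2[OF ind, where Y="\<lambda>k x. iexp (b k * x)"]) simp
  have "expectation (\<lambda>\<omega>. iexp (t * (c - X 0 \<omega> - (\<Sum>j<n. X (Suc j) \<omega> / (2 * real (Suc j) + 1) - d j)))) =
      iexp (t * (c + (\<Sum>j<n. d j))) * expectation (\<lambda>\<omega>. \<Prod>k<Suc n. iexp (b k * X k \<omega>))"
    unfolding linear by (simp add: distrib_left exp_add sum_distrib_left exp_sum)
  also have "expectation (\<lambda>\<omega>. \<Prod>k<Suc n. iexp (b k * X k \<omega>)) = (\<Prod>k<Suc n. expectation (\<lambda>\<omega>. iexp (b k * X k \<omega>)))"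
    by (rule indep_vars_lebesgue_integral[OF _ indep_vars_subset[OF ind_iexp]])
       (auto intro: integrable_iexp)
  finally show ?thesis by (simp add: char_distr b_def)
qed

text \<open>The left-hand side is the characteristic function of the \<open>n\<close>-th partial sum; dominated convergence passes to the limit.\<close>
lemma (in prob_space) char_odd_weighted_series_limit:
  fixes X :: "nat \<Rightarrow> 'a \<Rightarrow> real" and d :: "nat \<Rightarrow> real"
  assumes ind: "indep_vars (\<lambda>_. borel) X UNIV"
    and summ: "AE \<omega> in M. summable (\<lambda>j. X (Suc j) \<omega> / (2 * real (Suc j) + 1) - d j)"
  shows "(\<lambda>n. iexp (t * (c + (\<Sum>j<n. d j))) * (\<Prod>k<Suc n. char (distr M borel (X k)) (- t / (2 * real k + 1))))
          \<longlonglongrightarrow> char (distr M borel (\<lambda>\<omega>. c - X 0 \<omega> - (\<Sum>j. X (Suc j) \<omega> / (2 * real (Suc j) + 1) - d j))) t"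
proof -
  have [measurable]: "X i \<in> borel_measurable M" for i
    using ind unfolding indep_vars_def by auto
  have "(\<lambda>n. expectation (\<lambda>\<omega>. iexp (t * (c - X 0 \<omega> - (\<Sum>j<n. X (Suc j) \<omega> / (2 * real (Suc j) + 1) - d j))))) \<longlonglongrightarrow>
      expectation (\<lambda>\<omega>. iexp (t * (c - X 0 \<omega> - (\<Sum>j. X (Suc j) \<omega> / (2 * real (Suc j) + 1) - d j))))"
  proof (rule integral_dominated_convergence[where w="\<lambda>_. 1"])
    show "AE \<omega> in M. (\<lambda>n. iexp (t * (c - X 0 \<omega> - (\<Sum>j<n. X (Suc j) \<omega> / (2 * real (Suc j) + 1) - d j))))
        \<longlonglongrightarrow> iexp (t * (c - X 0 \<omega> - (\<Sum>j. X (Suc j) \<omega> / (2 * real (Suc j) + 1) - d j)))"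
      using summ by eventually_elim (intro tendsto_intros summable_LIMSEQ)
  qed auto
  moreover have "char (distr M borel (\<lambda>\<omega>. c - X 0 \<omega> - (\<Sum>j. X (Suc j) \<omega> / (2 * real (Suc j) + 1) - d j))) t =
      expectation (\<lambda>\<omega>. iexp (t * (c - X 0 \<omega> - (\<Sum>j. X (Suc j) \<omega> / (2 * real (Suc j) + 1) - d j))))"
    by (rule char_distr) simp
  ultimately show ?thesis
    by (simp only: char_odd_weighted_partial_sum[OF ind])
qed

section \<open>Gamma distributions\<close>

definition gamma_density :: "real \<Rightarrow> real \<Rightarrow> real" where
  "gamma_density a x = (if 0 < x then x powr (a - 1) * exp (- x) / Gamma a else 0)"

definition gamma_distribution :: "real \<Rightarrow> real measure" where
  "gamma_distribution a = density lborel (gamma_density a)"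

lemma borel_measurable_gamma_density [measurable]: "gamma_density a \<in> borel_measurable borel"
  unfolding gamma_density_def by measurable

lemma gamma_density_nonneg: "0 < a \<Longrightarrow> 0 \<le> gamma_density a x"
  by (simp add: gamma_density_def Gamma_real_pos less_imp_le)

lemma sets_gamma_distribution [simp, measurable_cong]: "sets (gamma_distribution a) = sets borel"
  by (simp add: gamma_distribution_def)

lemma space_gamma_distribution [simp]: "space (gamma_distribution a) = UNIV"
  by (simp add: gamma_distribution_def)

lemma nn_integral_gamma_density_moment:
  assumes "0 < a"
  shows "(\<integral>\<^sup>+x. ennreal (gamma_density a x * x ^ k) \<partial>lborel) = ennreal (Gamma (a + real k) / Gamma a)"
proof -
  have Ga: "0 < Gamma a" using assms by (rule Gamma_real_pos)
  have eq: "gamma_density a x * x ^ k = (indicator {0..} x * x powr (a + real k - 1) / exp x) * (1 / Gamma a)" for x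
  proof (cases "0 < x")
    case True
    then have "x powr (a - 1) * x ^ k = x powr (a + real k - 1)"
      by (simp add: powr_realpow[symmetric] powr_add[symmetric] algebra_simps)
    with True show ?thesis by (simp add: gamma_density_def exp_minus field_simps)
  qed (cases "x = 0"; simp add: gamma_density_def)
  have "(\<integral>\<^sup>+x. ennreal (gamma_density a x * x ^ k) \<partial>lborel) =
      (\<integral>\<^sup>+x. ennreal (indicator {0..} x * x powr (a + real k - 1) / exp x) * ennreal (1 / Gamma a) \<partial>lborel)"
    unfolding eq using Ga by (intro nn_integral_cong ennreal_mult'') simp
  also have "\<dots> = (\<integral>\<^sup>+x. ennreal (indicator {0..} x * x powr (a + real k - 1) / exp x) \<partial>lborel) * ennreal (1 / Gamma a)"
    by (rule nn_integral_multc) measurable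
  also have "\<dots> = ennreal (Gamma (a + real k)) * ennreal (1 / Gamma a)"
    using Gamma_conv_nn_integral_real[of "a + real k"] assms by simp
  also have "\<dots> = ennreal (Gamma (a + real k) / Gamma a)"
    using Ga by (simp add: ennreal_mult''[symmetric] divide_inverse)
  finally show ?thesis .
qed

lemma real_distribution_gamma_distribution:
  assumes "0 < a"
  shows "real_distribution (gamma_distribution a)"
proof -
  have "prob_space (gamma_distribution a)"
    using nn_integral_gamma_density_moment[OF assms, of 0] Gamma_real_pos[OF assms]
    by (intro prob_spaceI) (simp add: gamma_distribution_def emeasure_density)
  then show ?thesis
    by (simp add: real_distribution_def real_distribution_axioms_def)
qed

lemma gamma_distribution_moment:
  assumes "0 < a"
  shows "integrable (gamma_distribution a) (\<lambda>x. x ^ k)"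
    "integral\<^sup>L (gamma_distribution a) (\<lambda>x. x ^ k) = Gamma (a + real k) / Gamma a"
proof -
  have "has_bochner_integral lborel (\<lambda>x. gamma_density a x *\<^sub>R x ^ k) (Gamma (a + real k) / Gamma a)"
    using nn_integral_gamma_density_moment[OF assms, of k] assms
    by (intro has_bochner_integral_nn_integral)
       (auto simp: gamma_density_def Gamma_real_pos less_imp_le)
  then show "integrable (gamma_distribution a) (\<lambda>x. x ^ k)"
    "integral\<^sup>L (gamma_distribution a) (\<lambda>x. x ^ k) = Gamma (a + real k) / Gamma a"
    unfolding gamma_distribution_def
    by (simp_all add: integrable_density integral_density gamma_density_nonneg[OF assms]
        integrable.intros has_bochner_integral_integral_eq)
qed

lemma gamma_distribution_mean_variance:
  assumes "0 < a"
  shows "integral\<^sup>L (gamma_distribution a) (\<lambda>x. x) = a"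
    "integral\<^sup>L (gamma_distribution a) (\<lambda>x. (x - a)\<^sup>2) = a"
proof -
  interpret real_distribution "gamma_distribution a"
    by (rule real_distribution_gamma_distribution[OF assms])
  have nonint: "a \<notin> \<int>\<^sub>\<le>\<^sub>0" "a + 1 \<notin> \<int>\<^sub>\<le>\<^sub>0"
    using assms by (auto dest: nonpos_Ints_nonpos)
  show mean: "integral\<^sup>L (gamma_distribution a) (\<lambda>x. x) = a"
    using gamma_distribution_moment(2)[OF assms, of 1] Gamma_plus1[OF nonint(1)] Gamma_real_pos[OF assms]
    by simp
  have second: "integral\<^sup>L (gamma_distribution a) (\<lambda>x. x\<^sup>2) = a * (a + 1)"
    using gamma_distribution_moment(2)[OF assms, of 2] Gamma_plus1[OF nonint(2)]
      Gamma_plus1[OF nonint(1)] Gamma_real_pos[OF assms]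
    by (simp add: add.assoc)
  have "(\<lambda>x. (x - a)\<^sup>2) = (\<lambda>x. (x\<^sup>2 - 2 * a * x) + a\<^sup>2)"
    by (auto simp: power2_eq_square algebra_simps)
  then have "integral\<^sup>L (gamma_distribution a) (\<lambda>x. (x - a)\<^sup>2) =
      (integral\<^sup>L (gamma_distribution a) (\<lambda>x. x\<^sup>2) - 2 * a * integral\<^sup>L (gamma_distribution a) (\<lambda>x. x)) + a\<^sup>2"
    using gamma_distribution_moment(1)[OF assms, of 1] gamma_distribution_moment(1)[OF assms, of 2]
      prob_space by simp
  then show "integral\<^sup>L (gamma_distribution a) (\<lambda>x. (x - a)\<^sup>2) = a"
    unfolding mean second by (simp add: power2_eq_square algebra_simps)
qed

lemma gamma_distribution_one: "gamma_distribution 1 = density lborel (exponential_density 1)"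
  unfolding gamma_distribution_def
  by (rule density_cong)
     (auto simp: gamma_density_def exponential_density_def borel_measurable_erlang_density
           intro: AE_mp[OF AE_lborel_singleton[of 0]])

lemma gamma_density_mult_scaled:
  assumes x: "0 < x"
  shows "gamma_density a (x - x * s) * gamma_density b (x * s) =
    x powr (a + b - 2) * exp (- x) / (Gamma a * Gamma b) *
    (indicator {0..1} s * (s powr (b - 1) * (1 - s) powr (a - 1)))"
proof -
  consider "s \<le> 0" | "0 < s" "s < 1" | "1 \<le> s" by linarith
  then show ?thesis
  proof cases
    case 1
    then have "\<not> 0 < x * s" using x by (simp add: mult_le_0_iff not_less)
    with 1 show ?thesis by (cases "s = 0") (simp_all add: gamma_density_def)
  next
    case 3
    then have "\<not> 0 < x - x * s" using x by (simp add: not_less algebra_simps)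
    with 3 show ?thesis by (cases "s = 1") (simp_all add: gamma_density_def)
  next
    case 2
    have "x - x * s = x * (1 - s)" by (simp add: algebra_simps)
    moreover have "0 < x * (1 - s)" "0 < x * s" using 2 x by auto
    ultimately have "gamma_density a (x - x * s) * gamma_density b (x * s) =
        ((x * (1 - s)) powr (a - 1) * exp (- (x * (1 - s))) / Gamma a) * ((x * s) powr (b - 1) * exp (- (x * s)) / Gamma b)"
      by (simp add: gamma_density_def)
    also have "\<dots> = (x powr (a - 1) * x powr (b - 1)) * (exp (- (x * (1 - s))) * exp (- (x * s))) *
        ((1 - s) powr (a - 1) * s powr (b - 1)) / (Gamma a * Gamma b)"
    proof -
      have "(x * (1 - s)) powr (a - 1) = x powr (a - 1) * (1 - s) powr (a - 1)"
        "(x * s) powr (b - 1) = x powr (b - 1) * s powr (b - 1)"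
        using 2 x by (simp_all add: powr_mult)
      then show ?thesis by (simp add: field_simps)
    qed
    also have "x powr (a - 1) * x powr (b - 1) = x powr (a + b - 2)"
      by (simp add: powr_add[symmetric])
    also have "exp (- (x * (1 - s))) * exp (- (x * s)) = exp (- x)"
      by (simp add: exp_add[symmetric] algebra_simps)
    finally show ?thesis using 2 by (simp add: mult_ac)
  qed
qed

text \<open>Substituting \<open>y = x s\<close> turns the convolution integral into a Beta integral.\<close>
lemma gamma_density_convolution:
  assumes a: "0 < a" and b: "0 < b"
  shows "(\<integral>\<^sup>+y. ennreal (gamma_density a (x - y)) * ennreal (gamma_density b y) \<partial>lborel) = ennreal (gamma_density (a + b) x)"
proof (cases "0 < x")
  case False
  then have zero: "ennreal (gamma_density a (x - y)) * ennreal (gamma_density b y) = 0" for y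
    by (cases "0 < y") (auto simp: gamma_density_def)
  show ?thesis
    using False by (simp only: zero) (simp add: gamma_density_def)
next
  case x: True
  have Ga: "0 < Gamma a" and Gb: "0 < Gamma b" using a b by (simp_all add: Gamma_real_pos)
  define C where "C = x powr (a + b - 2) * exp (- x) / (Gamma a * Gamma b)"
  define B where "B s = indicator {0..1} s * (s powr (b - 1) * (1 - s) powr (a - 1))" for s :: real
  have "0 \<le> C" using Ga Gb by (simp add: C_def)
  have integrand: "ennreal (gamma_density a (x - (0 + x * s))) * ennreal (gamma_density b (0 + x * s)) = ennreal C * ennreal (B s)" for s
    using gamma_density_mult_scaled[OF x, of a s b] \<open>0 \<le> C\<close>
    by (simp add: ennreal_mult[symmetric] gamma_density_nonneg a b C_def B_def)
  have B_nn_integral: "(\<integral>\<^sup>+s. ennreal C * ennreal (B s) \<partial>lborel) = ennreal C * ennreal (Beta b a)"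
    using nn_integral_has_integral_lebesgue[OF _ has_integral_Beta_real[OF b a]]
    by (subst nn_integral_cmult) (auto simp: B_def)
  have "(\<integral>\<^sup>+y. ennreal (gamma_density a (x - y)) * ennreal (gamma_density b y) \<partial>lborel) =
      ennreal \<bar>x\<bar> * (\<integral>\<^sup>+s. ennreal (gamma_density a (x - (0 + x * s))) * ennreal (gamma_density b (0 + x * s)) \<partial>lborel)"
    by (rule nn_integral_real_affine) (use x in auto)
  also have "\<dots> = ennreal (x * C * Beta b a)"
    using x \<open>0 \<le> C\<close> Ga Gb
    by (simp only: integrand B_nn_integral) (simp add: ennreal_mult[symmetric] Beta_def Gamma_real_pos a b add_pos_pos)
  also have "x * C * Beta b a = gamma_density (a + b) x"
  proof -
    have "x * x powr (a + b - 2) = x powr (a + b - 1)"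
      using x powr_add[of x "a + b - 2" 1] by (simp add: algebra_simps)
    then show ?thesis using x Ga Gb
      by (simp add: C_def Beta_def gamma_density_def field_simps add.commute)
  qed
  finally show ?thesis .
qed

lemma gamma_distribution_convolution:
  assumes "0 < a" "0 < b"
  shows "gamma_distribution a \<star> gamma_distribution b = gamma_distribution (a + b)"
proof -
  have "finite_measure (gamma_distribution a)" "finite_measure (gamma_distribution b)"
    using real_distribution_gamma_distribution assms
    by (auto intro: prob_space.finite_measure simp: real_distribution_def)
  then show ?thesis
    unfolding gamma_distribution_def
    by (subst convolution_density) (auto simp: gamma_density_convolution assms)
qed

lemma char_gamma_distribution_mult:
  assumes "0 < a" "1 \<le> m"
  shows "char (gamma_distribution (real m * a)) t = char (gamma_distribution a) t ^ m"
  using \<open>1 \<le> m\<close>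
proof (induction m rule: dec_induct)
  case (step m)
  have "0 < real m * a" using step(1) assms(1) by simp
  then have "char (gamma_distribution (real (Suc m) * a)) t =
      char (gamma_distribution (real m * a)) t * char (gamma_distribution a) t"
    using assms(1)
    by (simp add: distrib_right gamma_distribution_convolution[symmetric] char_convolution
        real_distribution_gamma_distribution)
  with step(3) show ?case by simp
qed simp

lemma interval_integral_exp_mult_0_infinity:
  fixes c :: complex
  assumes "Re c < 0"
  shows "(CLBINT x=0..\<infinity>. exp (c * of_real x)) = - 1 / c"
proof -
  have "c \<noteq> 0" using assms by (intro notI) simp
  define F where "F x = exp (c * of_real x) / c" for x :: real
  have "(CLBINT x=0..\<infinity>. exp (c * of_real x)) = 0 - F 0"
  proof (rule interval_integral_FTC_integrable)
    show "(F has_vector_derivative exp (c * of_real x)) (at x)" for x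
    proof -
      have "((\<lambda>z. exp (c * z) / c) has_field_derivative exp (c * of_real x)) (at (of_real x))"
        using \<open>c \<noteq> 0\<close> by (auto intro!: derivative_eq_intros)
      from has_vector_derivative_real_field[OF this] show ?thesis
        unfolding F_def[abs_def] by blast
    qed
    show "set_integrable lborel (einterval 0 \<infinity>) (\<lambda>x. exp (c * of_real x))"
    proof (rule set_integrable_bound[where f="\<lambda>x. exp (- (x * - Re c))"])
      show "set_integrable lborel (einterval 0 \<infinity>) (\<lambda>x. exp (- (x * - Re c)))"
        using integrable_I0i_exp_mscale[of "- Re c"] assms by (simp add: zero_ereal_def)
      show "set_borel_measurable lborel (einterval 0 \<infinity>) (\<lambda>x. exp (c * of_real x))"
        unfolding set_borel_measurable_def by measurable
      show "AE x in lborel. x \<in> einterval 0 \<infinity> \<longrightarrow> norm (exp (c * of_real x)) \<le> norm (exp (- (x * - Re c)))"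
        by (simp add: norm_exp_eq_Re)
    qed
    show "((F \<circ> real_of_ereal) \<longlongrightarrow> F 0) (at_right 0)"
      unfolding zero_ereal_def ereal_tendsto_simps F_def using \<open>c \<noteq> 0\<close> by (intro tendsto_intros) auto
    have norm_F: "(\<lambda>x. norm (F x)) = (\<lambda>x. exp (Re c * x) / norm c)"
      by (simp add: F_def norm_divide norm_exp_eq_Re fun_eq_iff)
    have "((\<lambda>x. norm (F x)) \<longlongrightarrow> 0) at_top"
      unfolding norm_F by (rule tendsto_divide_zero) (use assms in real_asymp)
    then show "((F \<circ> real_of_ereal) \<longlongrightarrow> 0) (at_left \<infinity>)"
      unfolding ereal_tendsto_simps by (rule tendsto_norm_zero_cancel)
    show "isCont (\<lambda>x. exp (c * of_real x)) x" for x
      by (intro continuous_intros)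
  qed simp
  also have "\<dots> = - 1 / c" by (simp add: F_def)
  finally show ?thesis .
qed

lemma char_gamma_distribution_one: "char (gamma_distribution 1) s = 1 / (1 - \<i> * of_real s)"
proof -
  define c where "c = \<i> * of_real s - 1"
  have "char (gamma_distribution 1) s = (CLINT x|lborel. gamma_density 1 x *\<^sub>R iexp (s * x))"
    unfolding char_def gamma_distribution_def
    by (rule integral_density) (auto simp: gamma_density_nonneg)
  also have "\<dots> = (CLINT x|lborel. indicator {0<..} x *\<^sub>R exp (c * of_real x))"
  proof (rule Bochner_Integration.integral_cong[OF refl])
    fix x :: real
    have "of_real (exp (- x)) * iexp (s * x) = exp (c * of_real x)"
      by (simp add: c_def exp_of_real[symmetric] exp_add[symmetric] algebra_simps)
    then show "gamma_density 1 x *\<^sub>R iexp (s * x) = indicator {0<..} x *\<^sub>R exp (c * of_real x)"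
      by (simp add: gamma_density_def scaleR_conv_of_real)
  qed
  also have "\<dots> = - 1 / c"
    using interval_integral_exp_mult_0_infinity[of c]
    by (simp add: c_def interval_lebesgue_integral_0_infty set_lebesgue_integral_def)
  also have "\<dots> = 1 / (1 - \<i> * of_real s)"
    by (simp add: c_def divide_simps)
  finally show ?thesis .
qed

lemma char_gamma_distribution_power:
  assumes "1 \<le> n" "real n * a = 1"
  shows "char (gamma_distribution a) s ^ n = 1 / (1 - \<i> * of_real s)"
proof -
  have "a = 1 / real n" using assms by (simp add: field_simps)
  with \<open>1 \<le> n\<close> have "0 < a" by simp
  then show ?thesis
    using char_gamma_distribution_mult[of a n s] assms char_gamma_distribution_one by simp
qed

lemma (in prob_space) distr_exponential_eq_gamma_distribution:
  assumes "distributed M lborel X (\<lambda>x. ennreal (exponential_density 1 x))"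
  shows "distr M borel X = gamma_distribution 1"
proof -
  have "distr M borel X = distr M lborel X"
    by (rule distr_cong) simp_all
  then show ?thesis
    using distributed_distr_eq_density[OF assms] by (simp add: gamma_distribution_one)
qed

lemma iid_sequence_PiM:
  assumes "real_distribution \<rho>"
  shows "prob_space (PiM (UNIV :: nat set) (\<lambda>_. \<rho>))"
    "prob_space.indep_vars (PiM (UNIV :: nat set) (\<lambda>_. \<rho>)) (\<lambda>_. borel) (\<lambda>k \<omega>. \<omega> k) UNIV"
    "\<And>k. distr (PiM (UNIV :: nat set) (\<lambda>_. \<rho>)) borel (\<lambda>\<omega>. \<omega> k) = \<rho>"
proof -
  interpret \<rho>: real_distribution \<rho> by fact
  define Q where "Q = PiM (UNIV :: nat set) (\<lambda>_. \<rho>)"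
  interpret Q: prob_space Q unfolding Q_def by (rule prob_space_PiM) (rule \<rho>.prob_space_axioms)
  show "prob_space (PiM (UNIV :: nat set) (\<lambda>_. \<rho>))" by (fold Q_def) unfold_locales
  have [measurable]: "(\<lambda>\<omega>. \<omega> k) \<in> measurable Q borel" for k
    using measurable_component_singleton[of k UNIV "\<lambda>_. \<rho>"] by (simp add: Q_def cong: measurable_cong_sets)
  have component: "distr Q borel (\<lambda>\<omega>. \<omega> k) = \<rho>" for k
  proof -
    have "distr Q borel (\<lambda>\<omega>. \<omega> k) = distr Q \<rho> (\<lambda>\<omega>. \<omega> k)"
      by (rule distr_cong) simp_all
    also have "\<dots> = \<rho>" unfolding Q_def
      by (rule distr_PiM_component) (simp_all add: \<rho>.prob_space_axioms)
    finally show ?thesis .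
  qed
  then show "\<And>k. distr (PiM (UNIV :: nat set) (\<lambda>_. \<rho>)) borel (\<lambda>\<omega>. \<omega> k) = \<rho>"
    by (simp add: Q_def)
  have "sets (PiM UNIV (\<lambda>_. borel)) = sets Q"
    unfolding Q_def by (rule sets_PiM_cong) simp_all
  then have "distr Q (PiM UNIV (\<lambda>_. borel)) (\<lambda>x. \<lambda>i\<in>UNIV. x i) = distr Q Q (\<lambda>x. x)"
    by (intro distr_cong) (simp_all add: restrict_UNIV)
  then have "distr Q (PiM UNIV (\<lambda>_. borel)) (\<lambda>x. \<lambda>i\<in>UNIV. x i) = PiM UNIV (\<lambda>i. distr Q borel (\<lambda>\<omega>. \<omega> i))"
    unfolding component by (simp add: Q_def)
  then have "Q.indep_vars (\<lambda>_. borel) (\<lambda>k \<omega>. \<omega> k) UNIV"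
    by (subst Q.indep_vars_iff_distr_eq_PiM) simp_all
  then show "prob_space.indep_vars (PiM (UNIV :: nat set) (\<lambda>_. \<rho>)) (\<lambda>_. borel) (\<lambda>k \<omega>. \<omega> k) UNIV"
    unfolding Q_def .
qed

section \<open>The characteristic function of \<open>ln \<bar>Z\<bar>\<close>\<close>

definition ln_abs_normal_char :: "real \<Rightarrow> complex" where
  "ln_abs_normal_char t = iexp (t * ln 2 / 2) * Gamma ((1 + \<i> * of_real t) / 2) / of_real (sqrt pi)"

lemma lborel_integral_even:
  fixes f :: "real \<Rightarrow> 'b::{banach, second_countable_topology}"
  assumes f: "integrable lborel f" and even: "\<And>x. f (- x) = f x"
  shows "integral\<^sup>L lborel f = 2 *\<^sub>R (LINT x:{0<..}|lborel. f x)"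
proof -
  have "integral\<^sup>L lborel f = integral\<^sup>L lborel (\<lambda>x. indicator {0<..} x *\<^sub>R f x + indicator {..<0} x *\<^sub>R f x)"
    by (rule integral_cong_AE)
       (use AE_lborel_singleton[of 0] f in \<open>auto elim!: eventually_mono split: split_indicator\<close>)
  also have "\<dots> = (LINT x:{0<..}|lborel. f x) + (LINT x:{..<0}|lborel. f x)"
    unfolding set_lebesgue_integral_def
    by (rule Bochner_Integration.integral_add) (auto intro!: integrable_mult_indicator f)
  also have "(LINT x:{..<0}|lborel. f x) = (LINT x:{0<..}|lborel. f x)"
    unfolding set_lebesgue_integral_def
    using lborel_integral_real_affine[of "-1" "\<lambda>x. indicator {..<0} x *\<^sub>R f x" 0]
    by (simp add: even indicator_def if_distrib cong: if_cong)
  finally show ?thesis by (simp add: scaleR_2)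
qed

lemma set_integral_Ioi_sqrt_substitution:
  fixes f :: "real \<Rightarrow> 'b::euclidean_space"
  assumes cont: "\<And>x. 0 < x \<Longrightarrow> isCont f x"
    and int: "set_integrable lborel {0<..} f"
    and int_subst: "set_integrable lborel {0<..} (\<lambda>u. (1 / sqrt (2 * u)) *\<^sub>R f (sqrt (2 * u)))"
  shows "(LINT x:{0<..}|lborel. f x) = (LINT u:{0<..}|lborel. (1 / sqrt (2 * u)) *\<^sub>R f (sqrt (2 * u)))"
proof -
  have Ioi: "einterval 0 \<infinity> = {0::real<..}"
    by (auto simp: einterval_def zero_ereal_def)
  have "(LBINT x=0..\<infinity>. f x) = (LBINT u=0..\<infinity>. (1 / sqrt (2 * u)) *\<^sub>R f (sqrt (2 * u)))"
  proof (rule interval_integral_substitution_integrable)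
    show "DERIV (\<lambda>u. sqrt (2 * u)) x :> 1 / sqrt (2 * x)" if "0 < ereal x" for x
      using that by (auto intro!: derivative_eq_intros simp: field_simps real_sqrt_mult)
    have "((\<lambda>u. sqrt (2 * u)) \<longlongrightarrow> sqrt (2 * 0)) (at_right (0::real))"
      by (intro tendsto_intros)
    then show "((ereal \<circ> (\<lambda>u. sqrt (2 * u)) \<circ> real_of_ereal) \<longlongrightarrow> 0) (at_right 0)"
      unfolding zero_ereal_def ereal_tendsto_simps by simp
    have "filterlim (\<lambda>u::real. sqrt (2 * u)) at_top at_top" by real_asymp
    then show "((ereal \<circ> (\<lambda>u. sqrt (2 * u)) \<circ> real_of_ereal) \<longlongrightarrow> \<infinity>) (at_left \<infinity>)"
      unfolding ereal_tendsto_simps by simp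
  qed (use cont int int_subst in \<open>auto simp: Ioi intro!: continuous_intros\<close>)
  then show ?thesis
    by (simp add: interval_lebesgue_integral_0_infty)
qed

lemma std_normal_ln_abs_integrand_sqrt:
  fixes t u :: real
  assumes u: "0 < u"
  defines "z \<equiv> (1 + \<i> * of_real t) / 2"
  shows "(1 / sqrt (2 * u)) *\<^sub>R (std_normal_density (sqrt (2 * u)) *\<^sub>R iexp (t * ln \<bar>sqrt (2 * u)\<bar>)) =
      (iexp (t * ln 2 / 2) / (2 * of_real (sqrt pi))) * (of_real u powr (z - 1) / of_real (exp u))"
proof -
  have "(z - 1) * of_real (ln u) = of_real (- ln u / 2) + \<i> * of_real (t * ln u / 2)"
    by (simp add: z_def field_simps)
  then have "of_real u powr (z - 1) = of_real (exp (- ln u / 2)) * iexp (t * ln u / 2)"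
    using u by (simp only: powr_def Ln_of_real exp_add exp_of_real) simp
  also have "exp (- ln u / 2) = 1 / sqrt u"
    using u by (simp add: powr_half_sqrt[symmetric] powr_def exp_minus inverse_eq_divide)
  finally have u_powr: "of_real u powr (z - 1) = of_real (1 / sqrt u) * iexp (t * ln u / 2)" .
  have ln_sqrt: "iexp (t * ln \<bar>sqrt (2 * u)\<bar>) = iexp (t * ln 2 / 2) * iexp (t * ln u / 2)"
    using u by (simp add: ln_sqrt ln_mult distrib_left exp_add[symmetric] field_simps)
  have "1 / sqrt (2 * u) * std_normal_density (sqrt (2 * u)) = exp (-u) / (sqrt (2 * u) * sqrt (2 * pi))"
    using u by (simp add: std_normal_density_def)
  also have "\<dots> = (1 / sqrt u) / exp u / (2 * sqrt pi)"
    using u by (simp add: real_sqrt_mult exp_minus field_simps)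
  finally have density: "1 / sqrt (2 * u) * std_normal_density (sqrt (2 * u)) = (1 / sqrt u) / exp u / (2 * sqrt pi)" .
  have "(1 / sqrt (2 * u)) *\<^sub>R (std_normal_density (sqrt (2 * u)) *\<^sub>R iexp (t * ln \<bar>sqrt (2 * u)\<bar>)) =
      of_real (1 / sqrt (2 * u) * std_normal_density (sqrt (2 * u))) * iexp (t * ln \<bar>sqrt (2 * u)\<bar>)"
    by (simp add: scaleR_conv_of_real)
  also have "\<dots> = (iexp (t * ln 2 / 2) / (2 * of_real (sqrt pi))) * (of_real u powr (z - 1) / of_real (exp u))"
    unfolding density ln_sqrt u_powr by (simp add: field_simps)
  finally show ?thesis .
qed

lemma Gamma_set_integral_lborel:
  fixes z :: complex
  assumes "0 < Re z"
  shows "set_integrable lborel {0<..} (\<lambda>u. of_real u powr (z - 1) / of_real (exp u))"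
    "(LINT u:{0<..}|lborel. of_real u powr (z - 1) / of_real (exp u)) = Gamma z"
proof -
  have "set_borel_measurable lborel {0<..} (\<lambda>u::real. of_real u powr (z - 1) / of_real (exp u))"
    unfolding set_borel_measurable_def
    by (auto intro!: borel_measurable_continuous_on_indicator continuous_intros)
  then show si: "set_integrable lborel {0<..} (\<lambda>u. of_real u powr (z - 1) / of_real (exp u))"
    using absolutely_integrable_Gamma_integral'[OF assms]
    by (simp add: set_integrable_def set_borel_measurable_def integrable_completion)
  show "(LINT u:{0<..}|lborel. of_real u powr (z - 1) / of_real (exp u)) = Gamma z"
    using set_borel_integral_eq_integral(2)[OF si] integral_unique[OF Gamma_integral_complex'[OF assms]]
    by simp
qed

text \<open>The substitution \<open>x = \<surd>(2u)\<close> turns \<open>E[\<bar>Z\<bar>\<^bsup>it\<^esup>]\<close> into Euler's integral for \<open>\<Gamma>((1 + it)/2)\<close>.\<close>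
lemma integral_std_normal_iexp_ln_abs:
  "(CLINT x|lborel. std_normal_density x *\<^sub>R iexp (t * ln \<bar>x\<bar>)) = ln_abs_normal_char t"
proof -
  define h where "h x = std_normal_density x *\<^sub>R iexp (t * ln \<bar>x\<bar>)" for x
  define z where "z = (1 + \<i> * of_real t) / 2"
  define K where "K = iexp (t * ln 2 / 2) / (2 * of_real (sqrt pi))"
  define \<Gamma> where "\<Gamma> u = of_real u powr (z - 1) / of_real (exp u)" for u :: real
  have "0 < Re z" by (simp add: z_def)
  have substituted: "(1 / sqrt (2 * u)) *\<^sub>R h (sqrt (2 * u)) = K * \<Gamma> u" if "0 < u" for u
    using std_normal_ln_abs_integrand_sqrt[OF that, of t] by (simp add: h_def K_def \<Gamma>_def z_def)
  have [measurable]: "h \<in> borel_measurable lborel" unfolding h_def by measurable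
  have int_h: "integrable lborel h"
  proof (rule Bochner_Integration.integrable_bound)
    show "integrable lborel std_normal_density"
      using integrable_std_normal_moment[of 0] by simp
    show "AE x in lborel. norm (h x) \<le> norm (std_normal_density x)"
      by (simp add: h_def)
  qed simp
  have "integral\<^sup>L lborel h = 2 *\<^sub>R (LINT x:{0<..}|lborel. h x)"
    by (rule lborel_integral_even[OF int_h]) (simp add: h_def std_normal_density_def)
  also have "(LINT x:{0<..}|lborel. h x) = (LINT u:{0<..}|lborel. (1 / sqrt (2 * u)) *\<^sub>R h (sqrt (2 * u)))"
  proof (rule set_integral_Ioi_sqrt_substitution)
    show "isCont h x" if "0 < x" for x
      using that unfolding h_def std_normal_density_def by (intro continuous_intros) auto
    show "set_integrable lborel {0<..} h"
      unfolding set_integrable_def by (rule integrable_mult_indicator) (simp_all add: int_h)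
    have "set_integrable lborel {0<..} (\<lambda>u. K * \<Gamma> u)"
      unfolding \<Gamma>_def by (rule set_integrable_mult_right[OF Gamma_set_integral_lborel(1)[OF \<open>0 < Re z\<close>]])
    then show "set_integrable lborel {0<..} (\<lambda>u. (1 / sqrt (2 * u)) *\<^sub>R h (sqrt (2 * u)))"
      by (subst set_integrable_cong[OF refl refl, where f'="\<lambda>u. K * \<Gamma> u"]) (simp_all add: substituted)
  qed
  also have "\<dots> = (LINT u:{0<..}|lborel. K * \<Gamma> u)"
    by (rule set_lebesgue_integral_cong) (simp_all add: substituted)
  also have "\<dots> = K * (LINT u:{0<..}|lborel. \<Gamma> u)"
    by (rule set_integral_mult_right)
  also have "\<dots> = K * Gamma z"
    unfolding \<Gamma>_def Gamma_set_integral_lborel(2)[OF \<open>0 < Re z\<close>] ..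
  finally show ?thesis
    by (simp add: h_def K_def z_def ln_abs_normal_char_def scaleR_conv_of_real)
qed

lemma (in prob_space) char_ln_abs_normal:
  assumes "distributed M lborel Z (\<lambda>x. ennreal (std_normal_density x))"
  shows "char (distr M borel (\<lambda>\<omega>. ln \<bar>Z \<omega>\<bar>)) t = ln_abs_normal_char t"
proof -
  have [measurable]: "Z \<in> measurable M lborel" "Z \<in> borel_measurable M"
    using distributed_measurable[OF assms] by simp_all
  have "char (distr M borel (\<lambda>\<omega>. ln \<bar>Z \<omega>\<bar>)) t = expectation (\<lambda>\<omega>. iexp (t * ln \<bar>Z \<omega>\<bar>))"
    by (rule char_distr) measurable
  also have "\<dots> = (CLINT x|distr M lborel Z. iexp (t * ln \<bar>x\<bar>))"
    by (subst integral_distr) auto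
  also have "\<dots> = (CLINT x|lborel. std_normal_density x *\<^sub>R iexp (t * ln \<bar>x\<bar>))"
    unfolding distributed_distr_eq_density[OF assms] by (rule integral_density) auto
  also have "\<dots> = ln_abs_normal_char t"
    by (rule integral_std_normal_iexp_ln_abs)
  finally show ?thesis .
qed

lemma sum_ln_one_plus_inverse: "(\<Sum>j<n. ln (1 + 1 / real (Suc j))) = ln (real (Suc n))"
proof (induction n)
  case (Suc n)
  have "ln (real (Suc n)) + ln (1 + 1 / real (Suc n)) = ln (real (Suc n) * (1 + 1 / real (Suc n)))"
  proof -
    have "0 < 1 + 1 / real (Suc n)" by (simp add: add_pos_pos)
    then show ?thesis by (simp add: ln_mult)
  qed
  also have "real (Suc n) * (1 + 1 / real (Suc n)) = real (Suc (Suc n))"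
    by (simp add: field_simps)
  finally show ?case using Suc by simp
qed simp

lemma pochhammer_half_divide:
  fixes t :: real
  shows "pochhammer (1/2 :: complex) m / pochhammer ((1 + \<i> * of_real t) / 2) m =
    (\<Prod>k<m. 1 / (1 + \<i> * of_real (t / (2 * real k + 1))))"
proof -
  have factor: "(1/2 + of_nat k) / ((1 + \<i> * of_real t) / 2 + of_nat k) = 1 / (1 + \<i> * of_real (t / (2 * real k + 1)))"
    for k :: nat
  proof -
    have "(1 + \<i> * of_real t) / 2 + of_nat k = (1/2 + of_nat k) * (1 + \<i> * of_real (t / (2 * real k + 1)))"
      by (simp add: complex_eq_iff field_simps)
    moreover have "(1/2 :: complex) + of_nat k \<noteq> 0" "1 + \<i> * of_real (t / (2 * real k + 1)) \<noteq> 0"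
      by (auto simp: complex_eq_iff)
    ultimately show ?thesis by simp
  qed
  have "pochhammer (1/2 :: complex) m / pochhammer ((1 + \<i> * of_real t) / 2) m =
      (\<Prod>k<m. (1/2 + of_nat k) / ((1 + \<i> * of_real t) / 2 + of_nat k))"
    by (simp add: pochhammer_prod prod_dividef atLeast0LessThan)
  also have "\<dots> = (\<Prod>k<m. 1 / (1 + \<i> * of_real (t / (2 * real k + 1))))"
    by (intro prod.cong refl factor)
  finally show ?thesis .
qed

lemma Gamma_series_divide_half:
  fixes z :: complex
  shows "Gamma_series z n / Gamma_series (1/2) n =
    exp ((z - 1/2) * of_real (ln (real n))) * (pochhammer (1/2) (Suc n) / pochhammer z (Suc n))"
proof -
  have "(1/2 :: complex) + of_nat k \<noteq> 0" for k
    by (simp add: complex_eq_iff)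
  then have "pochhammer (1/2 :: complex) (Suc n) \<noteq> 0"
    by (simp add: pochhammer_prod)
  moreover have "exp (z * of_real (ln (real n))) =
      exp ((z - 1/2) * of_real (ln (real n))) * exp (1/2 * of_real (ln (real n)))"
    by (simp add: exp_add[symmetric] algebra_simps)
  ultimately show ?thesis by (simp add: Gamma_series_def field_simps)
qed

text \<open>Gauss's product formula for \<open>\<Gamma>((1 + it)/2) / \<Gamma>(1/2)\<close>.\<close>
lemma ln_abs_normal_char_product_limit:
  "(\<lambda>n. iexp (t * (ln 2 / 2 + (\<Sum>j<n. ln (1 + 1 / real (Suc j)) / 2))) *
        (\<Prod>k<Suc n. 1 / (1 + \<i> * of_real (t / (2 * real k + 1)))))
     \<longlonglongrightarrow> ln_abs_normal_char t"
proof -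
  define z where "z = (1 + \<i> * of_real t) / 2"
  define G where "G n = exp ((\<i> * of_real (t/2)) * of_real (ln (real (Suc n)) - ln (real n)))" for n
  have "z - 1/2 = \<i> * of_real (t/2)"
    by (simp add: z_def field_simps)
  note Gamma_series_ratio = Gamma_series_divide_half[of z, unfolded this]
  have ev: "eventually (\<lambda>n. iexp (t * (ln 2 / 2 + (\<Sum>j<n. ln (1 + 1 / real (Suc j)) / 2))) *
              (\<Prod>k<Suc n. 1 / (1 + \<i> * of_real (t / (2 * real k + 1)))) =
          iexp (t * ln 2 / 2) * G n * (Gamma_series z n / Gamma_series (1/2) n)) at_top"
    using eventually_ge_at_top[of "1::nat"]
  proof eventually_elim
    case (elim n)
    have "(\<Sum>j<n. ln (1 + 1 / real (Suc j)) / 2) = ln (real (Suc n)) / 2"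
      using sum_ln_one_plus_inverse[of n] by (simp add: sum_divide_distrib[symmetric])
    then have partial_exp: "iexp (t * (ln 2 / 2 + (\<Sum>j<n. ln (1 + 1 / real (Suc j)) / 2))) =
        iexp (t * ln 2 / 2) * exp ((\<i> * of_real (t/2)) * of_real (ln (real (Suc n))))"
      by (simp add: exp_add[symmetric] field_simps)
    have G: "G n * exp ((\<i> * of_real (t/2)) * of_real (ln (real n))) =
        exp ((\<i> * of_real (t/2)) * of_real (ln (real (Suc n))))"
      by (simp add: G_def exp_add[symmetric] field_simps)
    show ?case
      unfolding partial_exp Gamma_series_ratio pochhammer_half_divide[where t=t, folded z_def] G[symmetric]
      by (simp add: mult_ac)
  qed
  have ln_Suc: "(\<lambda>n. ln (real (Suc n)) - ln (real n)) \<longlonglongrightarrow> 0" by real_asymp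
  have "(\<lambda>n. iexp (t * ln 2 / 2) * G n * (Gamma_series z n / Gamma_series (1/2) n))
      \<longlonglongrightarrow> iexp (t * ln 2 / 2) * exp ((\<i> * of_real (t/2)) * of_real 0) * (Gamma z / Gamma (1/2))"
    unfolding G_def by (intro tendsto_intros ln_Suc Gamma_series_LIMSEQ) (simp add: Gamma_one_half_complex)
  then have "(\<lambda>n. iexp (t * ln 2 / 2) * G n * (Gamma_series z n / Gamma_series (1/2) n))
      \<longlonglongrightarrow> ln_abs_normal_char t"
    by (simp add: Gamma_one_half_complex ln_abs_normal_char_def z_def)
  then show ?thesis
    by (rule Lim_transform_eventually) (use ev in \<open>auto elim: eventually_mono\<close>)
qed

section \<open>The centering constant\<close>

lemma harm_double_Suc:
  "harm (2 * n + 1) = 1 + (\<Sum>j<n. 1 / (2 * real (Suc j) + 1)) + harm n / 2"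
proof (induction n)
  case (Suc n)
  have "harm (2 * Suc n + 1) = harm (2 * n + 1) + inverse (real (Suc n)) / 2 + 1 / (2 * real (Suc n) + 1)"
    by (simp add: harm_Suc eval_nat_numeral field_simps)
  with Suc show ?case by (simp add: harm_Suc add_divide_distrib)
qed (simp add: harm_def)

lemma summable_odd_reciprocal_minus_half_ln:
  "summable (\<lambda>j. 1 / (2 * real (Suc j) + 1) - ln (1 + 1 / real (Suc j)) / 2)"
proof (rule summable_comparison_test_bigo)
  show "summable (\<lambda>j. norm (1 / real j ^ 2))"
    using summable_inverse_square by simp
  show "(\<lambda>j::nat. 1 / (2 * real (Suc j) + 1) - ln (1 + 1 / real (Suc j)) / 2) \<in> O(\<lambda>j. 1 / real j ^ 2)"
    by real_asymp
qed

lemma suminf_odd_reciprocal_minus_half_ln: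
  "(\<Sum>j. 1 / (2 * real (Suc j) + 1) - ln (1 + 1 / real (Suc j)) / 2) = ln 2 + euler_mascheroni / 2 - 1"
proof -
  define d where "d j = 1 / (2 * real (Suc j) + 1) - ln (1 + 1 / real (Suc j)) / 2" for j
  have partial: "(\<Sum>j<n. d j) = (harm (2 * n + 1) - ln (real (2 * n + 1))) - (harm n - ln (real n)) / 2
      + (ln (real (2 * n + 1)) - ln (real n) / 2 - ln (real (Suc n)) / 2) - 1" for n
    using harm_double_Suc[of n] sum_ln_one_plus_inverse[of n]
    by (simp add: d_def sum_subtractf sum_divide_distrib[symmetric] algebra_simps diff_divide_distrib)
  have odd_harm: "(\<lambda>n. harm (2 * n + 1) - ln (real (2 * n + 1))) \<longlonglongrightarrow> euler_mascheroni"
    using LIMSEQ_subseq_LIMSEQ[OF euler_mascheroni_LIMSEQ, of "\<lambda>n. 2 * n + 1"]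
    by (simp add: o_def strict_mono_def)
  have ln_odd: "(\<lambda>n::nat. ln (real (2 * n + 1)) - ln (real n) / 2 - ln (real (Suc n)) / 2) \<longlonglongrightarrow> ln 2"
    by real_asymp
  have "(\<lambda>n. \<Sum>j<n. d j) \<longlonglongrightarrow> euler_mascheroni - euler_mascheroni / 2 + ln 2 - 1"
    unfolding partial by (intro tendsto_intros odd_harm ln_odd euler_mascheroni_LIMSEQ) simp
  then have "d sums (ln 2 + euler_mascheroni / 2 - 1)"
    by (simp add: sums_def algebra_simps)
  then show ?thesis unfolding d_def by (rule sums_unique[symmetric])
qed

lemma summable_suminf_odd_weighted_shift:
  fixes x :: "nat \<Rightarrow> real"
  assumes "summable (\<lambda>j. (x j - a) / (2 * real (Suc j) + 1))"
  shows "summable (\<lambda>j. x j / (2 * real (Suc j) + 1) - a * ln (1 + 1 / real (Suc j)) / 2)"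
    "(\<Sum>j. x j / (2 * real (Suc j) + 1) - a * ln (1 + 1 / real (Suc j)) / 2) =
       (\<Sum>j. (x j - a) / (2 * real (Suc j) + 1)) + a * (ln 2 + euler_mascheroni / 2 - 1)"
proof -
  have eq: "(\<lambda>j. x j / (2 * real (Suc j) + 1) - a * ln (1 + 1 / real (Suc j)) / 2) =
      (\<lambda>j. (x j - a) / (2 * real (Suc j) + 1) + a * (1 / (2 * real (Suc j) + 1) - ln (1 + 1 / real (Suc j)) / 2))"
    by (simp add: diff_divide_distrib algebra_simps)
  have summ: "summable (\<lambda>j. a * (1 / (2 * real (Suc j) + 1) - ln (1 + 1 / real (Suc j)) / 2))"
    by (intro summable_mult summable_odd_reciprocal_minus_half_ln)
  show "summable (\<lambda>j. x j / (2 * real (Suc j) + 1) - a * ln (1 + 1 / real (Suc j)) / 2)"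
    unfolding eq by (intro summable_add assms summ)
  show "(\<Sum>j. x j / (2 * real (Suc j) + 1) - a * ln (1 + 1 / real (Suc j)) / 2) =
       (\<Sum>j. (x j - a) / (2 * real (Suc j) + 1)) + a * (ln 2 + euler_mascheroni / 2 - 1)"
    unfolding eq suminf_add[OF assms summ, symmetric] suminf_mult[OF summable_odd_reciprocal_minus_half_ln]
      suminf_odd_reciprocal_minus_half_ln ..
qed

section \<open>Series of Gamma variables\<close>

context prob_space
begin

lemma AE_summable_gamma_series:
  fixes X :: "nat \<Rightarrow> 'a \<Rightarrow> real"
  assumes "0 < a" and ind: "indep_vars (\<lambda>_. borel) X UNIV"
    and law: "\<And>k. distr M borel (X k) = gamma_distribution a"
  shows "AE \<omega> in M. summable (\<lambda>j. (X (Suc j) \<omega> - a) / (2 * real (Suc j) + 1))"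
proof -
  have [measurable]: "X k \<in> borel_measurable M" for k
    using ind unfolding indep_vars_def by auto
  have integrable: "integrable M (\<lambda>\<omega>. X k \<omega> ^ i)" for k i
  proof -
    have "integrable (distr M borel (X k)) (\<lambda>x. x ^ i)"
      unfolding law by (rule gamma_distribution_moment(1)[OF \<open>0 < a\<close>])
    then show ?thesis by (subst (asm) integrable_distr_eq) auto
  qed
  have expectation: "expectation (\<lambda>\<omega>. f (X k \<omega>)) = integral\<^sup>L (gamma_distribution a) f"
    if [measurable]: "f \<in> borel_measurable borel" for f :: "real \<Rightarrow> real" and k
    using integral_distr[of "X k" M borel f] law[of k] by simp
  have "AE \<omega> in M. summable (\<lambda>j. (X j \<omega> - a) / (2 * real j + 1))"
  proof (rule AE_summable_centered_odd_weights[OF ind])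
    show "AE \<omega> in M. 0 \<le> X k \<omega>" for k
    proof (rule AE_distrD[of "X k" M borel])
      show "AE x in distr M borel (X k). 0 \<le> x"
        unfolding law gamma_distribution_def by (subst AE_density) (auto simp: gamma_density_def)
    qed simp_all
    show "integrable M (X k)" "integrable M (\<lambda>\<omega>. (X k \<omega>)\<^sup>2)" for k
      using integrable[of k 1] integrable[of k 2] by simp_all
    show "expectation (X k) = a" for k
      using expectation[of "\<lambda>x. x" k] gamma_distribution_mean_variance(1)[OF \<open>0 < a\<close>] by simp
    show "expectation (\<lambda>\<omega>. (X k \<omega> - a)\<^sup>2) = a" for k
      using expectation[of "\<lambda>x. (x - a)\<^sup>2" k] gamma_distribution_mean_variance(2)[OF \<open>0 < a\<close>] by simp
  qed
  then show ?thesis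
  proof eventually_elim
    case (elim \<omega>)
    then show ?case
      using summable_Suc_iff[where f="\<lambda>j. (X j \<omega> - a) / (2 * real j + 1)"] by simp
  qed
qed

lemma char_gamma_series_power:
  fixes X :: "nat \<Rightarrow> 'a \<Rightarrow> real"
  assumes n: "1 \<le> n" "real n * a = 1" and ind: "indep_vars (\<lambda>_. borel) X UNIV"
    and law: "\<And>k. distr M borel (X k) = gamma_distribution a"
  shows "char (distr M borel (\<lambda>\<omega>. a * ln 2 / 2 - X 0 \<omega>
      - (\<Sum>j. X (Suc j) \<omega> / (2 * real (Suc j) + 1) - a * ln (1 + 1 / real (Suc j)) / 2))) t ^ n
    = ln_abs_normal_char t"
proof -
  have "a = 1 / real n" using n by (simp add: field_simps)
  with \<open>1 \<le> n\<close> have "0 < a" by simp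
  have "AE \<omega> in M. summable (\<lambda>j. X (Suc j) \<omega> / (2 * real (Suc j) + 1) - a * ln (1 + 1 / real (Suc j)) / 2)"
    using AE_summable_gamma_series[OF \<open>0 < a\<close> ind law]
    by eventually_elim (rule summable_suminf_odd_weighted_shift(1))
  then have lim: "(\<lambda>m. (iexp (t * (a * ln 2 / 2 + (\<Sum>j<m. a * ln (1 + 1 / real (Suc j)) / 2))) *
      (\<Prod>k<Suc m. char (gamma_distribution a) (- t / (2 * real k + 1)))) ^ n) \<longlonglongrightarrow>
      char (distr M borel (\<lambda>\<omega>. a * ln 2 / 2 - X 0 \<omega>
        - (\<Sum>j. X (Suc j) \<omega> / (2 * real (Suc j) + 1) - a * ln (1 + 1 / real (Suc j)) / 2))) t ^ n"
    by (intro tendsto_power) (rule char_odd_weighted_series_limit[OF ind, unfolded law])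
  have power: "(iexp (t * (a * ln 2 / 2 + (\<Sum>j<m. a * ln (1 + 1 / real (Suc j)) / 2))) *
      (\<Prod>k<Suc m. char (gamma_distribution a) (- t / (2 * real k + 1)))) ^ n =
      iexp (t * (ln 2 / 2 + (\<Sum>j<m. ln (1 + 1 / real (Suc j)) / 2))) *
      (\<Prod>k<Suc m. 1 / (1 + \<i> * of_real (t / (2 * real k + 1))))" for m
  proof -
    have "t * (a * ln 2 / 2 + (\<Sum>j<m. a * ln (1 + 1 / real (Suc j)) / 2)) =
        a * (t * (ln 2 / 2 + (\<Sum>j<m. ln (1 + 1 / real (Suc j)) / 2)))"
      by (simp add: sum_distrib_left algebra_simps)
    then have "iexp (t * (a * ln 2 / 2 + (\<Sum>j<m. a * ln (1 + 1 / real (Suc j)) / 2))) ^ n =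
        exp (of_nat n * (\<i> * of_real (a * (t * (ln 2 / 2 + (\<Sum>j<m. ln (1 + 1 / real (Suc j)) / 2))))))"
      by (simp only: exp_of_nat_mult)
    also have "of_nat n * (\<i> * of_real (a * (t * (ln 2 / 2 + (\<Sum>j<m. ln (1 + 1 / real (Suc j)) / 2))))) =
        \<i> * of_real (real n * a * (t * (ln 2 / 2 + (\<Sum>j<m. ln (1 + 1 / real (Suc j)) / 2))))"
      by (simp add: algebra_simps)
    finally show ?thesis
      using n by (simp add: power_mult_distrib prod_power_distrib char_gamma_distribution_power[OF n])
  qed
  show ?thesis
    by (rule LIMSEQ_unique[OF lim[unfolded power] ln_abs_normal_char_product_limit])
qed

lemma distr_odd_weighted_series_recentered:
  fixes X :: "nat \<Rightarrow> 'a \<Rightarrow> real"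
  assumes [measurable]: "\<And>k. X k \<in> borel_measurable M"
    and "AE \<omega> in M. summable (\<lambda>j. (X (Suc j) \<omega> - 1) / (2 * real (Suc j) + 1))"
  shows "distr M borel (\<lambda>\<omega>. ln 2 / 2 - X 0 \<omega>
      - (\<Sum>j. X (Suc j) \<omega> / (2 * real (Suc j) + 1) - ln (1 + 1 / real (Suc j)) / 2)) =
    distr M borel (\<lambda>\<omega>. - (euler_mascheroni + ln 2) / 2 - (X 0 \<omega> - 1)
      - (\<Sum>j. (X (Suc j) \<omega> - 1) / (2 * real (Suc j) + 1)))"
proof (rule distr_cong_AE)
  show "AE \<omega> in M. ln 2 / 2 - X 0 \<omega>
      - (\<Sum>j. X (Suc j) \<omega> / (2 * real (Suc j) + 1) - ln (1 + 1 / real (Suc j)) / 2) =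
    - (euler_mascheroni + ln 2) / 2 - (X 0 \<omega> - 1) - (\<Sum>j. (X (Suc j) \<omega> - 1) / (2 * real (Suc j) + 1))"
    using assms(2)
    by eventually_elim (simp add: summable_suminf_odd_weighted_shift(2)[where a=1, simplified])
qed simp_all

end

lemma ln_abs_normal_char_roots:
  assumes "1 \<le> n"
  shows "\<exists>\<nu>. real_distribution \<nu> \<and> (\<forall>t. char \<nu> t ^ n = ln_abs_normal_char t)"
proof -
  define a where "a = 1 / real n"
  have "real n * a = 1" "0 < a" using assms by (simp_all add: a_def)
  define Q where "Q = PiM (UNIV :: nat set) (\<lambda>_. gamma_distribution a)"
  note iid = iid_sequence_PiM[OF real_distribution_gamma_distribution[OF \<open>0 < a\<close>], folded Q_def]
  interpret Q: prob_space Q by (rule iid(1))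
  have [measurable]: "(\<lambda>\<omega>. \<omega> k) \<in> borel_measurable Q" for k
    using iid(2) unfolding Q.indep_vars_def by auto
  show ?thesis
    using Q.char_gamma_series_power[OF assms \<open>real n * a = 1\<close> iid(2,3)]
    by (intro exI[of _ "distr Q borel (\<lambda>\<omega>. a * ln 2 / 2 - \<omega> 0
        - (\<Sum>j. \<omega> (Suc j) / (2 * real (Suc j) + 1) - a * ln (1 + 1 / real (Suc j)) / 2))"]) auto
qed

theorem mainTheorem1:
  fixes M :: "'a measure" and Z :: "'a \<Rightarrow> real"
    and N :: "'b measure" and E :: "nat \<Rightarrow> 'b \<Rightarrow> real"
  assumes "prob_space M"
    and "distributed M lborel Z (\<lambda>x. ennreal (std_normal_density x))"
    and "prob_space N"
    and "prob_space.indep_vars N (\<lambda>_. borel) E UNIV"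
    and "\<And>j. distributed N lborel (E j) (\<lambda>x. ennreal (exponential_density 1 x))"
  shows "infinitely_divisible (distr M borel (\<lambda>\<omega>. ln \<bar>Z \<omega>\<bar>)) \<and>
         (AE \<omega> in N. summable (\<lambda>j. E (Suc j) \<omega> / (2 * real (Suc j) + 1)
                                   - ln (1 + 1 / real (Suc j)) / 2)) \<and>
         (AE \<omega> in N. summable (\<lambda>j. (E (Suc j) \<omega> - 1) / (2 * real (Suc j) + 1))) \<and>
         distr M borel (\<lambda>\<omega>. ln \<bar>Z \<omega>\<bar>) =
         distr N borel (\<lambda>\<omega>. ln 2 / 2 - E 0 \<omega>
            - (\<Sum>j. E (Suc j) \<omega> / (2 * real (Suc j) + 1) - ln (1 + 1 / real (Suc j)) / 2)) \<and>
         distr M borel (\<lambda>\<omega>. ln \<bar>Z \<omega>\<bar>) =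
         distr N borel (\<lambda>\<omega>. - (euler_mascheroni + ln 2) / 2 - (E 0 \<omega> - 1)
            - (\<Sum>j. (E (Suc j) \<omega> - 1) / (2 * real (Suc j) + 1)))"
proof -
  interpret M: prob_space M by fact
  interpret N: prob_space N by fact
  have [measurable]: "Z \<in> borel_measurable M" "E j \<in> borel_measurable N" for j
    using distributed_measurable[OF assms(2)] assms(4) by (auto simp: N.indep_vars_def)
  have law: "distr N borel (E j) = gamma_distribution 1" for j
    by (rule N.distr_exponential_eq_gamma_distribution[OF assms(5)])
  have char_ln_abs: "char (distr M borel (\<lambda>\<omega>. ln \<bar>Z \<omega>\<bar>)) = ln_abs_normal_char"
    using M.char_ln_abs_normal[OF assms(2)] by auto
  have centered: "AE \<omega> in N. summable (\<lambda>j. (E (Suc j) \<omega> - 1) / (2 * real (Suc j) + 1))"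
    using N.AE_summable_gamma_series[OF _ assms(4) law] by simp
  then have "AE \<omega> in N. summable (\<lambda>j. E (Suc j) \<omega> / (2 * real (Suc j) + 1) - ln (1 + 1 / real (Suc j)) / 2)"
    by eventually_elim (simp add: summable_suminf_odd_weighted_shift(1)[where a=1, simplified])
  moreover have "distr M borel (\<lambda>\<omega>. ln \<bar>Z \<omega>\<bar>) = distr N borel (\<lambda>\<omega>. ln 2 / 2 - E 0 \<omega>
      - (\<Sum>j. E (Suc j) \<omega> / (2 * real (Suc j) + 1) - ln (1 + 1 / real (Suc j)) / 2))"
    using N.char_gamma_series_power[of 1 1, OF _ _ assms(4) law] char_ln_abs
    by (intro Levy_uniqueness) auto
  moreover have "infinitely_divisible (distr M borel (\<lambda>\<omega>. ln \<bar>Z \<omega>\<bar>))"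
    using ln_abs_normal_char_roots char_ln_abs by (intro infinitely_divisible_if_char_roots) auto
  ultimately show ?thesis
    using centered N.distr_odd_weighted_series_recentered[OF _ centered] by simp
qed

end
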